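(* In the situation of a directed cycle $a_1\to b_1\to\cdots\to a_p\to b_p\to a_{p+1}=a_1$ in $\Gamma^M$ as described in the context, assume in addition that $M$ is the prefix matching generated by a diagonal matching rule $F$. Then $d_i=c_i+1$ for all $i$.
   Context: $G$ is a finite simple connected graph with distance $d$; $\ell(x_0,\dots,x_k)=\sum_{i=0}^{k-1}d(x_i,x_{i+1})$; sequences are elements of $I_{k,l}(G)=\{(x_0,\dots,x_k)\in V(G)^{k+1}:x_i\ne x_{i+1}\ \forall i,\ \ell=l\}$. $\Gamma$ is the directed graph on sequences with an edge $a\to b$ whenever $b$ is obtained from $a=(x_0,\dots,x_k)$ by deleting some $x_i$, $1\le i\le k-1$, with $\ell(b)=\ell(a)$. A matching is a set of pairwise vertex-disjoint edges of $\Gamma$; $\Gamma^M$ is $\Gamma$ with edges of $M$ reversed. Matching states: "unmatched", "insert$(i,v)$" (matched to $(x_0,\dots,x_i,v,x_{i+1},\dots,x_k)$), "delete$(i)$" (matched to $(x_0,\dots,\hat x_i,\dots,x_k)$). A prefix matching: whenever $(x_0,\dots,x_k)$ has state insert$(i,v)$ (resp. delete$(i)$), every sequence $(x_0,\dots,x_{i+1},y_{i+2},\dots,y_{k'})$ has the same state. A matching rule is a function $F$ from sequences to $\{\epsilon\}\cup\{\iota(v):v\in V(G)\}\cup\{\delta\}$; a prefix matching $M$ is generated by $F$ if for every sequence $(x_0,\dots,x_k)$, $k\ge1$, with unmatched prefix $(x_0,\dots,x_{k-1})$, its state is insert$(k-1,v)$ iff $F(x_0,\dots,x_k)=\iota(v)$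 and delete$(k-1)$ iff $F(x_0,\dots,x_k)=\delta$. $F$ is valid if (1) $F(x_0,\dots,x_k)=\iota(v)$ implies $v\notin\{x_{k-1},x_k\}$, $d(x_{k-1},v)+d(v,x_k)=d(x_{k-1},x_k)$, $F(x_0,\dots,x_{k-1},v)=\epsilon$, $F(x_0,\dots,x_{k-1},v,x_k)=\delta$; (2) $F(x_0,\dots,x_k)=\delta$ implies $d(x_{k-2},x_{k-1})+d(x_{k-1},x_k)=d(x_{k-2},x_k)$ and $F(x_0,\dots,x_{k-2},x_k)=\iota(x_{k-1})$. A valid $F$ is diagonal if, w.r.t. the prefix matching it generates, $F(x_0,\dots,x_k)\ne\epsilon$ for every sequence with unmatched prefix and $d(x_{k-1},x_k)\ge2$. Cycle setting: $a_i\in I_{k,l}(G)$, $b_i\in I_{k-1,l}(G)$, each $a_i\to b_i$ is an edge of $\Gamma$ not in $M$, each $b_i\to a_{i+1}$ is a reversed edge of $M$; $d_i$ is the position of the entry of $a_i$ deleted to obtain $b_i$; $a_{i+1}=(b_{i,0},\dots,b_{i,c_i},u_i,b_{i,c_i+1},\dots,b_{i,k-1})$ where $b_i=(b_{i,0},\dots,b_{i,k-1})$; indices $i$ are taken modulo $p$. *)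

theory Defs
  imports Main
begin

definition simple_graph :: "'v set \<Rightarrow> ('v \<Rightarrow> 'v \<Rightarrow> bool) \<Rightarrow> bool" where
  "simple_graph V E \<longleftrightarrow> finite V \<and> (\<forall>x y. E x y \<longrightarrow> x \<in> V \<and> y \<in> V)
     \<and> (\<forall>x y. E x y \<longrightarrow> E y x) \<and> (\<forall>x. \<not> E x x)"

definition is_walk :: "('v \<Rightarrow> 'v \<Rightarrow> bool) \<Rightarrow> 'v list \<Rightarrow> bool" where
  "is_walk E xs \<longleftrightarrow> xs \<noteq> [] \<and> (\<forall>i. Suc i < length xs \<longrightarrow> E (xs ! i) (xs ! Suc i))"

definition connected_graph :: "'v set \<Rightarrow> ('v \<Rightarrow> 'v \<Rightarrow> bool) \<Rightarrow> bool" where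
  "connected_graph V E \<longleftrightarrow> V \<noteq> {} \<and>
     (\<forall>x\<in>V. \<forall>y\<in>V. \<exists>xs. is_walk E xs \<and> hd xs = x \<and> last xs = y)"

definition gdist :: "('v \<Rightarrow> 'v \<Rightarrow> bool) \<Rightarrow> 'v \<Rightarrow> 'v \<Rightarrow> nat" where
  "gdist E x y = (LEAST n. \<exists>xs. is_walk E xs \<and> hd xs = x \<and> last xs = y \<and> length xs = Suc n)"

text \<open>A sequence (x_0,...,x_k) is the list [x_0,...,x_k]; its length is k+1.\<close>
definition seq_len :: "('v \<Rightarrow> 'v \<Rightarrow> bool) \<Rightarrow> 'v list \<Rightarrow> nat" where
  "seq_len E xs = (\<Sum>i<length xs - 1. gdist E (xs ! i) (xs ! Suc i))"

definition is_seq :: "'v set \<Rightarrow> 'v list \<Rightarrow> bool" where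
  "is_seq V xs \<longleftrightarrow> xs \<noteq> [] \<and> set xs \<subseteq> V \<and> (\<forall>i. Suc i < length xs \<longrightarrow> xs ! i \<noteq> xs ! Suc i)"

definition I_kl :: "'v set \<Rightarrow> ('v \<Rightarrow> 'v \<Rightarrow> bool) \<Rightarrow> nat \<Rightarrow> nat \<Rightarrow> 'v list set" where
  "I_kl V E k l = {xs. is_seq V xs \<and> length xs = Suc k \<and> seq_len E xs = l}"

definition del_at :: "nat \<Rightarrow> 'v list \<Rightarrow> 'v list" where
  "del_at i xs = take i xs @ drop (Suc i) xs"

definition ins_after :: "nat \<Rightarrow> 'v \<Rightarrow> 'v list \<Rightarrow> 'v list" where
  "ins_after i v xs = take (Suc i) xs @ v # drop (Suc i) xs"

definition Gamma_edge :: "'v set \<Rightarrow> ('v \<Rightarrow> 'v \<Rightarrow> bool) \<Rightarrow> 'v list \<Rightarrow> 'v list \<Rightarrow> bool" where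
  "Gamma_edge V E a b \<longleftrightarrow> is_seq V a \<and> is_seq V b \<and>
     (\<exists>i. 1 \<le> i \<and> Suc i < length a \<and> b = del_at i a) \<and> seq_len E b = seq_len E a"

definition is_matching :: "'v set \<Rightarrow> ('v \<Rightarrow> 'v \<Rightarrow> bool) \<Rightarrow> ('v list \<times> 'v list) set \<Rightarrow> bool" where
  "is_matching V E M \<longleftrightarrow> (\<forall>(a, b)\<in>M. Gamma_edge V E a b) \<and>
     (\<forall>e\<in>M. \<forall>e'\<in>M. e \<noteq> e' \<longrightarrow> {fst e, snd e} \<inter> {fst e', snd e'} = {})"

definition unmatched :: "('v list \<times> 'v list) set \<Rightarrow> 'v list \<Rightarrow> bool" where
  "unmatched M x \<longleftrightarrow> (\<forall>(a, b)\<in>M. x \<noteq> a \<and> x \<noteq> b)"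

definition state_ins :: "('v list \<times> 'v list) set \<Rightarrow> 'v list \<Rightarrow> nat \<Rightarrow> 'v \<Rightarrow> bool" where
  "state_ins M x i v \<longleftrightarrow> (ins_after i v x, x) \<in> M"

definition state_del :: "('v list \<times> 'v list) set \<Rightarrow> 'v list \<Rightarrow> nat \<Rightarrow> bool" where
  "state_del M x i \<longleftrightarrow> (x, del_at i x) \<in> M"

definition prefix_matching :: "'v set \<Rightarrow> ('v \<Rightarrow> 'v \<Rightarrow> bool) \<Rightarrow> ('v list \<times> 'v list) set \<Rightarrow> bool" where
  "prefix_matching V E M \<longleftrightarrow> is_matching V E M \<and>
     (\<forall>x i v y. is_seq V x \<and> state_ins M x i v \<and> is_seq V y \<and> i + 2 \<le> length y
        \<and> take (i + 2) y = take (i + 2) x \<longrightarrow> state_ins M y i v) \<and>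
     (\<forall>x i y. is_seq V x \<and> state_del M x i \<and> is_seq V y \<and> i + 2 \<le> length y
        \<and> take (i + 2) y = take (i + 2) x \<longrightarrow> state_del M y i)"

datatype 'v rule_val = Eps | Iota 'v | Delta

text \<open>M is generated by F. For xs = (x_0,...,x_k), k = length xs - 1, and k - 1 = length xs - 2.\<close>
definition generated_by :: "'v set \<Rightarrow> ('v list \<times> 'v list) set \<Rightarrow> ('v list \<Rightarrow> 'v rule_val) \<Rightarrow> bool" where
  "generated_by V M F \<longleftrightarrow>
     (\<forall>xs. is_seq V xs \<and> 2 \<le> length xs \<and> unmatched M (butlast xs) \<longrightarrow>
        (\<forall>v. state_ins M xs (length xs - 2) v \<longleftrightarrow> F xs = Iota v) \<and>
        (state_del M xs (length xs - 2) \<longleftrightarrow> F xs = Delta))"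

definition valid_rule :: "'v set \<Rightarrow> ('v \<Rightarrow> 'v \<Rightarrow> bool) \<Rightarrow> ('v list \<Rightarrow> 'v rule_val) \<Rightarrow> bool" where
  "valid_rule V E F \<longleftrightarrow>
     (\<forall>xs v. is_seq V xs \<and> F xs = Iota v \<longrightarrow> v \<in> V) \<and>
     (\<forall>xs v. is_seq V xs \<and> 2 \<le> length xs \<and> F xs = Iota v \<longrightarrow>
        v \<noteq> xs ! (length xs - 2) \<and> v \<noteq> last xs \<and>
        gdist E (xs ! (length xs - 2)) v + gdist E v (last xs) = gdist E (xs ! (length xs - 2)) (last xs) \<and>
        F (butlast xs @ [v]) = Eps \<and> F (butlast xs @ [v, last xs]) = Delta) \<and>
     (\<forall>xs. is_seq V xs \<and> 2 \<le> length xs \<and> F xs = Delta \<longrightarrow>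
        3 \<le> length xs \<and>
        gdist E (xs ! (length xs - 3)) (xs ! (length xs - 2)) + gdist E (xs ! (length xs - 2)) (last xs)
          = gdist E (xs ! (length xs - 3)) (last xs) \<and>
        F (butlast (butlast xs) @ [last xs]) = Iota (xs ! (length xs - 2)))"

definition diagonal_rule :: "'v set \<Rightarrow> ('v \<Rightarrow> 'v \<Rightarrow> bool) \<Rightarrow> ('v list \<times> 'v list) set \<Rightarrow> ('v list \<Rightarrow> 'v rule_val) \<Rightarrow> bool" where
  "diagonal_rule V E M F \<longleftrightarrow> valid_rule V E F \<and>
     (\<forall>xs. is_seq V xs \<and> 2 \<le> length xs \<and> unmatched M (butlast xs) \<and>
        2 \<le> gdist E (xs ! (length xs - 2)) (last xs) \<longrightarrow> F xs \<noteq> Eps)"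

end

theory Submission
  imports Defs
begin

text \<open>Let x be a sequence of the cycle, with state delete(s), and let y be obtained from x by
  deleting the interior entry at position D without changing the length; y has state
  insert(t, v). If s + 2 \<le> D, then y shares its prefix of length s + 2 with x, so the prefix
  property hands y the state delete(s) as well, although y is matched by an insertion.
  Otherwise every prefix of x of length at most D is unmatched, hence so is every such prefix
  of y. As the deletion preserves the length, x_D lies on a geodesic from x_(D-1) to x_(D+1),
  so d(x_(D-1), x_(D+1)) \<ge> 2 and diagonality forces the prefix of y of length D + 1 to be
  matched. Since the shortest matched prefix of y has length t + 2, we get t + 1 = D.\<close>

lemma length_ins_after: "s < length x \<Longrightarrow> length (ins_after s v x) = Suc (length x)"
  unfolding ins_after_def by auto

lemma length_del_at: "s < length x \<Longrightarrow> length (del_at s x) = length x - 1"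
  unfolding del_at_def by (simp add: min_def)

lemma del_at_ins_after: "s < length x \<Longrightarrow> del_at (Suc s) (ins_after s v x) = x"
  unfolding del_at_def ins_after_def by (simp add: min_def)

lemma ins_after_del_at: "0 < i \<Longrightarrow> i < length x \<Longrightarrow> ins_after (i - 1) (x ! i) (del_at i x) = x"
  unfolding del_at_def ins_after_def using id_take_nth_drop[of i x] by (simp add: min_def)

lemma take_del_at: "n \<le> s \<Longrightarrow> take n (del_at s x) = take n x"
  unfolding del_at_def by (simp add: min_def)

lemma nth_del_at_less: "i < s \<Longrightarrow> s < length x \<Longrightarrow> del_at s x ! i = x ! i"
  unfolding del_at_def by (simp add: nth_append)

lemma nth_del_at_ge: "s \<le> i \<Longrightarrow> Suc i < length x \<Longrightarrow> del_at s x ! i = x ! Suc i"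
  unfolding del_at_def by (simp add: nth_append)

lemma nth_ins_after_le: "i \<le> s \<Longrightarrow> s < length x \<Longrightarrow> ins_after s v x ! i = x ! i"
  unfolding ins_after_def by (simp add: nth_append)

lemma nth_ins_after_Suc_Suc:
  "s \<le> i \<Longrightarrow> Suc i < length x \<Longrightarrow> ins_after s v x ! Suc (Suc i) = x ! Suc i"
  unfolding ins_after_def by (simp add: nth_append)

lemma is_seq_take: "is_seq V x \<Longrightarrow> 0 < n \<Longrightarrow> is_seq V (take n x)"
  unfolding is_seq_def using set_take_subset[of n x] by (auto simp: neq_Nil_conv)

lemma is_seq_nth_neq_Suc: "is_seq V x \<Longrightarrow> Suc i < length x \<Longrightarrow> x ! i \<noteq> x ! Suc i"
  unfolding is_seq_def by blast

lemma del_at_neq_of_less: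
  assumes "is_seq V x" "i < j" "Suc j < length x"
  shows "del_at i x \<noteq> del_at j x"
proof
  assume "del_at i x = del_at j x"
  then have "x ! Suc i = x ! i"
    using assms(2,3) nth_del_at_ge[of i i x] nth_del_at_less[of i j x] by simp
  with is_seq_nth_neq_Suc[OF assms(1), of i] assms(2,3) show False by simp
qed

lemma del_at_inj:
  assumes "is_seq V x" "Suc s < length x" "Suc s' < length x" "del_at s x = del_at s' x"
  shows "s = s'"
  using del_at_neq_of_less[OF assms(1)] assms(2-4) by (metis linorder_neqE_nat)

lemma ins_after_neq_of_less:
  assumes "is_seq V (ins_after i w x)" "i < j" "j < length x"
  shows "ins_after i w x \<noteq> ins_after j w' x"
proof
  assume "ins_after i w x = ins_after j w' x"
  then have "ins_after i w x ! Suc i = ins_after i w x ! Suc (Suc i)"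
    using assms(2,3) nth_ins_after_Suc_Suc[of i i x w] nth_ins_after_le[of "Suc i" j x w'] by simp
  moreover have "Suc (Suc i) < length (ins_after i w x)"
    using assms(2,3) by (simp add: length_ins_after)
  ultimately show False using is_seq_nth_neq_Suc[OF assms(1)] by blast
qed

lemma ins_after_inj:
  assumes "is_seq V (ins_after s v x)" "s < length x" "s' < length x"
    and "ins_after s v x = ins_after s' v' x"
  shows "s = s'"
proof (rule linorder_cases[of s s'])
  assume "s < s'"
  with ins_after_neq_of_less[OF assms(1)] assms(3,4) show ?thesis by blast
next
  assume "s' < s"
  with ins_after_neq_of_less[of V s' v' x s v] assms show ?thesis by simp
qed

lemma Gamma_edge_ins_after_interior:
  assumes "Gamma_edge V E (ins_after s v x) x" "s < length x"
  shows "s + 2 \<le> length x"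
proof (rule ccontr)
  assume "\<not> ?thesis"
  then have snoc: "ins_after s v x = x @ [v]"
    using assms(2) unfolding ins_after_def by simp
  obtain i where i: "Suc i < length (x @ [v])" "x = del_at i (x @ [v])"
    and seq: "is_seq V (x @ [v])"
    using assms(1) unfolding Gamma_edge_def snoc by blast
  have "x ! i = (x @ [v]) ! Suc i"
    using i(1) arg_cong[OF i(2), of "\<lambda>l. l ! i"] unfolding del_at_def
    by (simp add: nth_append min_def)
  moreover have "(x @ [v]) ! i = x ! i"
    using i(1) by (simp add: nth_append)
  ultimately show False
    using is_seq_nth_neq_Suc[OF seq i(1)] by simp
qed

lemma seq_len_single: "seq_len E [x] = 0"
  by (simp add: seq_len_def)

lemma seq_len_Cons_Cons: "seq_len E (x # y # zs) = gdist E x y + seq_len E (y # zs)"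
  unfolding seq_len_def by (simp add: sum.lessThan_Suc_shift del: sum.lessThan_Suc)

lemma seq_len_append:
  "xs \<noteq> [] \<Longrightarrow> ys \<noteq> [] \<Longrightarrow>
    seq_len E (xs @ ys) = seq_len E xs + gdist E (last xs) (hd ys) + seq_len E ys"
proof (induction xs rule: induct_list012)
  case (2 x)
  then show ?case by (cases ys) (simp_all add: seq_len_Cons_Cons seq_len_single)
qed (simp_all add: seq_len_Cons_Cons)

lemma seq_len_del_at:
  assumes "0 < D" "Suc D < length x"
  shows "seq_len E x + gdist E (x ! (D - 1)) (x ! Suc D) =
    seq_len E (del_at D x) + gdist E (x ! (D - 1)) (x ! D) + gdist E (x ! D) (x ! Suc D)"
proof -
  define A B where "A = take D x" and "B = drop (Suc D) x"
  have "A \<noteq> []"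
    using assms by (auto simp: A_def)
  then have A: "A \<noteq> []" "last A = x ! (D - 1)"
    using assms by (simp_all add: A_def last_conv_nth min_def)
  have B: "B \<noteq> []" "hd B = x ! Suc D"
    using assms by (auto simp: B_def hd_drop_conv_nth)
  obtain b bs where "B = b # bs"
    using B(1) by (cases B) auto
  then have "seq_len E (x ! D # B) = gdist E (x ! D) (hd B) + seq_len E B"
    by (simp add: seq_len_Cons_Cons)
  moreover have "x = A @ x ! D # B"
    using assms by (simp add: A_def B_def id_take_nth_drop)
  ultimately have "seq_len E x =
      seq_len E A + gdist E (last A) (x ! D) + (gdist E (x ! D) (hd B) + seq_len E B)"
    using A(1) seq_len_append[of A "x ! D # B" E] by simp
  moreover have "del_at D x = A @ B"
    by (simp add: A_def B_def del_at_def)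
  ultimately show ?thesis
    using A B by (simp add: seq_len_append)
qed

lemma gdist_pos:
  assumes "connected_graph V E" "x \<in> V" "y \<in> V" "x \<noteq> y"
  shows "1 \<le> gdist E x y"
proof (rule ccontr)
  assume "\<not> 1 \<le> gdist E x y"
  obtain xs where "is_walk E xs" "hd xs = x" "last xs = y"
    using assms unfolding connected_graph_def by blast
  then have "\<exists>n xs. is_walk E xs \<and> hd xs = x \<and> last xs = y \<and> length xs = Suc n"
    by (intro exI[of _ "length xs - 1"] exI[of _ xs]) (auto simp: is_walk_def)
  from LeastI_ex[OF this] \<open>\<not> 1 \<le> gdist E x y\<close>
  obtain ws where "hd ws = x" "last ws = y" "length ws = 1"
    unfolding gdist_def by auto
  with assms(4) show False by (cases ws) auto
qed

lemma gdist_ge_2_if_deletion_keeps_length: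
  assumes "connected_graph V E" "is_seq V x" "0 < D" "Suc D < length x"
    and "seq_len E (del_at D x) = seq_len E x"
  shows "2 \<le> gdist E (x ! (D - 1)) (x ! Suc D)"
proof -
  have "x ! n \<in> V" if "n < length x" for n
    using assms(2) nth_mem[OF that] unfolding is_seq_def by blast
  then have in_V: "x ! (D - 1) \<in> V" "x ! D \<in> V" "x ! Suc D \<in> V"
    using assms(4) by simp_all
  have "x ! (D - 1) \<noteq> x ! D" "x ! D \<noteq> x ! Suc D"
    using assms(3,4) is_seq_nth_neq_Suc[OF assms(2), of "D - 1"] is_seq_nth_neq_Suc[OF assms(2), of D]
    by simp_all
  then have "1 \<le> gdist E (x ! (D - 1)) (x ! D)" "1 \<le> gdist E (x ! D) (x ! Suc D)"
    using gdist_pos[OF assms(1)] in_V by blast+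
  with seq_len_del_at[OF assms(3,4), of E] assms(5) show ?thesis by simp
qed

definition has_state :: "('v list \<times> 'v list) set \<Rightarrow> 'v list \<Rightarrow> nat \<Rightarrow> bool" where
  "has_state M x s \<longleftrightarrow> state_del M x s \<or> (\<exists>v. state_ins M x s v)"

lemma has_state_not_unmatched: "has_state M x s \<Longrightarrow> \<not> unmatched M x"
  unfolding has_state_def state_del_def state_ins_def unmatched_def by auto

lemma matching_edge_unique:
  "is_matching V E M \<Longrightarrow> e \<in> M \<Longrightarrow> e' \<in> M \<Longrightarrow> x \<in> {fst e, snd e} \<Longrightarrow> x \<in> {fst e', snd e'}
    \<Longrightarrow> e = e'"
  unfolding is_matching_def by blast

lemma matching_Gamma_edge: "is_matching V E M \<Longrightarrow> (a, b) \<in> M \<Longrightarrow> Gamma_edge V E a b"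
  unfolding is_matching_def by blast

lemma not_unmatched_has_state:
  assumes "is_matching V E M" "\<not> unmatched M x"
  shows "\<exists>s. s + 2 \<le> length x \<and> has_state M x s"
proof -
  obtain a b where ab: "(a, b) \<in> M" "x = a \<or> x = b"
    using assms(2) unfolding unmatched_def by auto
  then obtain i where i: "0 < i" "Suc i < length a" "b = del_at i a"
    using matching_Gamma_edge[OF assms(1) ab(1)] unfolding Gamma_edge_def One_nat_def Suc_le_eq
    by blast
  show ?thesis
  proof (cases "x = a")
    case True
    with ab(1) i show ?thesis
      by (intro exI[of _ i]) (simp add: has_state_def state_del_def)
  next
    case False
    with ab have "x = b" by simp
    with ab(1) i ins_after_del_at[of i a] have "state_ins M x (i - 1) (a ! i)" "i - 1 + 2 \<le> length x"
      by (simp_all add: state_ins_def length_del_at)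
    then show ?thesis unfolding has_state_def by blast
  qed
qed

lemma state_del_not_state_ins:
  assumes "is_matching V E M" "state_del M x s" "state_ins M x t v" "t < length x"
  shows False
proof -
  have "(x, del_at s x) = (ins_after t v x, x)"
    using matching_edge_unique[OF assms(1) assms(2,3)[unfolded state_del_def state_ins_def], of x]
    by simp
  with length_ins_after[OF assms(4), of v] show False by simp
qed

lemma has_state_unique:
  assumes "is_matching V E M" "is_seq V x" "has_state M x s" "has_state M x s'"
    and "s + 2 \<le> length x" "s' + 2 \<le> length x"
  shows "s = s'"
proof (cases "state_del M x s"; cases "state_del M x s'")
  assume "state_del M x s" "state_del M x s'"
  then have "(x, del_at s x) = (x, del_at s' x)"
    using matching_edge_unique[OF assms(1), of "(x, del_at s x)" "(x, del_at s' x)" x]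
    unfolding state_del_def by simp
  with del_at_inj[OF assms(2)] assms(5,6) show ?thesis by simp
next
  assume "state_del M x s" "\<not> state_del M x s'"
  then obtain v where "state_ins M x s' v"
    using assms(4) unfolding has_state_def by blast
  with state_del_not_state_ins[OF assms(1) \<open>state_del M x s\<close> this] assms(6) show ?thesis by simp
next
  assume "\<not> state_del M x s" "state_del M x s'"
  then obtain v where "state_ins M x s v"
    using assms(3) unfolding has_state_def by blast
  with state_del_not_state_ins[OF assms(1) \<open>state_del M x s'\<close> this] assms(5) show ?thesis by simp
next
  assume "\<not> state_del M x s" "\<not> state_del M x s'"
  then obtain v v' where ins: "(ins_after s v x, x) \<in> M" "(ins_after s' v' x, x) \<in> M"
    using assms(3,4) unfolding has_state_def state_ins_def by blast
  then have "ins_after s v x = ins_after s' v' x"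
    using matching_edge_unique[OF assms(1) ins, of x] by simp
  moreover have "is_seq V (ins_after s v x)"
    using matching_Gamma_edge[OF assms(1) ins(1)] unfolding Gamma_edge_def by blast
  ultimately show ?thesis
    using ins_after_inj[of V s v x s' v'] assms(5,6) by simp
qed

lemma state_del_prefix:
  assumes "prefix_matching V E M" "is_seq V x" "state_del M x s" "is_seq V y"
    and "s + 2 \<le> length y" "take (s + 2) y = take (s + 2) x"
  shows "state_del M y s"
  using assms unfolding prefix_matching_def by blast

lemma has_state_prefix:
  assumes "prefix_matching V E M" "is_seq V x" "has_state M x s" "is_seq V y"
    and "s + 2 \<le> length y" "take (s + 2) y = take (s + 2) x"
  shows "has_state M y s"
  using assms unfolding prefix_matching_def has_state_def by blast

lemma unmatched_take_below_state:
  assumes "prefix_matching V E M" "is_seq V x" "has_state M x s" "s + 2 \<le> length x"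
    and "n < s + 2"
  shows "unmatched M (take n x)"
proof (rule ccontr)
  assume "\<not> unmatched M (take n x)"
  moreover have m: "is_matching V E M"
    using assms(1) unfolding prefix_matching_def by blast
  ultimately obtain t where t: "t + 2 \<le> length (take n x)" "has_state M (take n x) t"
    using not_unmatched_has_state by blast
  then have "has_state M x t"
    using has_state_prefix[OF assms(1) is_seq_take[OF assms(2)] t(2) assms(2)]
    by (simp add: min_absorb1)
  with has_state_unique[OF m assms(2,3)] assms(4,5) t(1) show False by fastforce
qed

lemma generated_by_not_unmatched:
  assumes "generated_by V M F" "is_seq V xs" "2 \<le> length xs" "unmatched M (butlast xs)"
    and "F xs \<noteq> Eps"
  shows "\<not> unmatched M xs"
proof -
  from assms(1-4) have "state_del M xs (length xs - 2) \<or> (\<exists>v. state_ins M xs (length xs - 2) v)"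
    using assms(5) unfolding generated_by_def by (cases "F xs") auto
  then show ?thesis
    using has_state_not_unmatched unfolding has_state_def by blast
qed

lemma del_position_eq_ins_position:
  assumes "connected_graph V E" "prefix_matching V E M" "generated_by V M F" "diagonal_rule V E M F"
    and x: "is_seq V x" "state_del M x s" "s + 2 \<le> length x"
    and D: "0 < D" "Suc D < length x" "y = del_at D x" "seq_len E y = seq_len E x"
    and y: "is_seq V y" "state_ins M y t v" "t + 2 \<le> length y"
  shows "D = t + 1"
proof -
  have m: "is_matching V E M"
    using assms(2) unfolding prefix_matching_def by blast
  have y_state: "has_state M y t"
    using y(2) unfolding has_state_def by blast
  have "\<not> s + 2 \<le> D"
  proof
    assume "s + 2 \<le> D"
    then have "state_del M y s"
      using state_del_prefix[OF assms(2) x(1,2) y(1)] D(2,3)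
      by (simp add: take_del_at length_del_at)
    with state_del_not_state_ins[OF m _ y(2)] y(3) show False by simp
  qed
  then have short_unmatched: "unmatched M (take n y)" if "n \<le> D" for n
    using unmatched_take_below_state[OF assms(2) x(1) _ x(3)] x(2) D(3) that
    by (simp add: take_del_at has_state_def)
  define z where "z = take (Suc D) y"
  have z: "is_seq V z" "length z = Suc D" "butlast z = take D y"
    using is_seq_take[OF y(1)] D(2,3) by (simp_all add: z_def length_del_at butlast_take)
  have "last z = z ! D"
    using z(2) by (cases z rule: rev_cases) auto
  then have "z ! (length z - 2) = x ! (D - 1)" "last z = x ! Suc D"
    using D z(2) by (simp_all add: z_def nth_del_at_less nth_del_at_ge)
  then have "2 \<le> gdist E (z ! (length z - 2)) (last z)"
    using gdist_ge_2_if_deletion_keeps_length[OF assms(1) x(1) D(1,2)] D(3,4) by simp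
  then have "F z \<noteq> Eps"
    using assms(4) z D(1) short_unmatched[of D] unfolding diagonal_rule_def by auto
  then have "\<not> unmatched M (take (Suc D) y)"
    using generated_by_not_unmatched[OF assms(3) z(1)] z D(1) short_unmatched[of D]
    by (simp add: z_def)
  then have "t + 2 \<le> Suc D"
    using unmatched_take_below_state[OF assms(2) y(1) y_state y(3)] by (meson not_le)
  moreover have "has_state M (take (t + 2) y) t"
    using has_state_prefix[OF assms(2) y(1) y_state is_seq_take[OF y(1)]] y(3)
    by (simp add: min_absorb1)
  then have "\<not> unmatched M (take (t + 2) y)"
    by (rule has_state_not_unmatched)
  ultimately show ?thesis
    using short_unmatched[of "t + 2"] by fastforce
qed

theorem lemma3p7:
  fixes V :: "'v set" and E :: "'v \<Rightarrow> 'v \<Rightarrow> bool"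
    and M :: "('v list \<times> 'v list) set" and F :: "'v list \<Rightarrow> 'v rule_val"
    and p k l :: nat and a b :: "nat \<Rightarrow> 'v list" and d c :: "nat \<Rightarrow> nat" and u :: "nat \<Rightarrow> 'v"
  assumes "simple_graph V E" and "connected_graph V E"
    and "prefix_matching V E M" and "generated_by V M F" and "diagonal_rule V E M F"
    and "1 \<le> p"
    and "\<forall>i<p. a i \<in> I_kl V E k l \<and> b i \<in> I_kl V E (k - 1) l"
    and "\<forall>i<p. Gamma_edge V E (a i) (b i) \<and> (a i, b i) \<notin> M"
    and "\<forall>i<p. (a (Suc i mod p), b i) \<in> M"
    and "\<forall>i<p. 1 \<le> d i \<and> d i + 1 \<le> k \<and> b i = del_at (d i) (a i)"
    and "\<forall>i<p. c i < k \<and> a (Suc i mod p) = ins_after (c i) (u i) (b i)"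
  shows "\<forall>i<p. d i = c i + 1"
proof (intro allI impI)
  fix i assume "i < p"
  obtain j where j: "j < p" "Suc j mod p = i"
  proof (cases i)
    case 0
    with that[of "p - 1"] \<open>1 \<le> p\<close> show ?thesis by simp
  next
    case (Suc i')
    with that[of i'] \<open>i < p\<close> show ?thesis by simp
  qed
  have m: "is_matching V E M"
    using assms(3) unfolding prefix_matching_def by blast
  have lengths: "length (a i) = Suc k" "length (b i) = k" "length (b j) = k"
    and seqs: "is_seq V (a i)" "is_seq V (b i)" "seq_len E (b i) = seq_len E (a i)"
    using assms(7,10) \<open>i < p\<close> j(1) unfolding I_kl_def by auto
  have pred: "(a i, b j) \<in> M" "a i = ins_after (c j) (u j) (b j)" "c j < k"
    using assms(9,11) j by auto
  have succ: "state_ins M (b i) (c i) (u i)" "c i < k"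
    using assms(9,11) \<open>i < p\<close> unfolding state_ins_def by auto
  have a_state: "state_del M (a i) (Suc (c j))"
    using pred lengths(3) by (simp add: state_del_def del_at_ins_after)
  have "c j + 2 \<le> k"
    using Gamma_edge_ins_after_interior matching_Gamma_edge[OF m pred(1)] pred(2,3) lengths(3)
    by metis
  moreover have "c i + 2 \<le> k"
    using Gamma_edge_ins_after_interior matching_Gamma_edge[OF m succ(1)[unfolded state_ins_def]]
      succ(2) lengths(2) by metis
  moreover have "0 < d i" "Suc (d i) < length (a i)" "b i = del_at (d i) (a i)"
    using assms(10) \<open>i < p\<close> lengths(1) by auto
  ultimately show "d i = c i + 1"
    using del_position_eq_ins_position[OF assms(2-5) seqs(1) a_state, of "d i" "b i" "c i" "u i"]
      seqs succ lengths by simp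
qed

end
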